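(* For every $x\in B_1(e_N)$, $$\lim_{s\to0^+}\mathbb{G}_\alpha[\Gamma_s](x)=+\infty,\qquad\text{where }\ \mathbb{G}_\alpha[\Gamma_s](x)=\int_{B_1(e_N)}G_\alpha(x,y)\Gamma_s(y)dy,\quad \Gamma_s(y)=\frac{c_{N,\alpha}}{|y+se_N|^{N+2\alpha}}.$$
   Context: $N\ge2$, $\alpha\in(0,1)$, $e_N=(0,\dots,0,1)$, $B_1(e_N)$ the open unit ball centered at $e_N$, $c_{N,\alpha}=\left(\int_{\mathbb{R}^N}\frac{1-\cos(z_1)}{|z|^{N+2\alpha}}dz\right)^{-1}$. $G_\alpha$ is the Green kernel of the fractional Laplacian $(-\Delta)^\alpha$ in $B_1(e_N)$ with zero exterior condition. *)

theory Defs
  imports "HOL-Analysis.Analysis"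
begin

text \<open>Normalising constant c_{N,alpha} of the fractional Laplacian in R^N, N = CARD('n);
  the coordinate i plays the role of z_1 (the value is independent of i by symmetry).\<close>
definition c_frac :: "'n::finite \<Rightarrow> real \<Rightarrow> real" where
  "c_frac i \<alpha> = 1 / (LINT z|(lborel :: (real^'n) measure).
      (1 - cos (z $ i)) / norm z powr (real CARD('n) + 2 * \<alpha>))"

text \<open>Constant in the Riesz / Blumenthal-Getoor-Ray formula for the Green function of
  (-Delta)^alpha (symbol |xi|^(2 alpha)) in a ball, N > 2 alpha.\<close>
definition kappa_green :: "nat \<Rightarrow> real \<Rightarrow> real" where
  "kappa_green N \<alpha> = Gamma (real N / 2) / (2 powr (2 * \<alpha>) * pi powr (real N / 2) * (Gamma \<alpha>)\<^sup>2)"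

text \<open>Green kernel of (-Delta)^alpha in the unit ball B_1(e) with zero exterior condition
  (extended by 0 outside B_1(e) x B_1(e) and on the diagonal).\<close>
definition green_ball :: "real \<Rightarrow> real^'n::finite \<Rightarrow> real^'n \<Rightarrow> real^'n \<Rightarrow> real" where
  "green_ball \<alpha> e x y =
     (if x \<in> ball e 1 \<and> y \<in> ball e 1 \<and> x \<noteq> y then
        kappa_green CARD('n) \<alpha> * dist x y powr (2 * \<alpha> - real CARD('n)) *
        (LBINT t=0..((1 - (dist x e)\<^sup>2) * (1 - (dist y e)\<^sup>2) / (dist x y)\<^sup>2).
            t powr (\<alpha> - 1) * (t + 1) powr (- real CARD('n) / 2))
      else 0)"

end

(*
  Fix x in the ball B = B_1(e). Away from its pole the Green kernel is bounded below by
  C (1 - |y - e|^2)^alpha, and everywhere above by C' |x - y|^(2 alpha - N). The ball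
  B_(s/2)(s e) lies in B, it has volume of order s^N, on it Gamma_s is of order s^(-N - 2 alpha)
  and 1 - |y - e|^2 >= s/2. Integrating over this ball alone bounds the potential from below
  by a multiple of s^N * s^alpha * s^(-N - 2 alpha) = s^(-alpha), which tends to infinity.

  Two integrability facts are needed because a Bochner integral of a non-integrable function
  is 0: the upper bound for the Green kernel makes the integrand integrable for every s > 0,
  and c_(N,alpha) > 0 because its defining integral converges, which is shown by summing over
  dyadic shells around 0 and around infinity.
*)

theory Submission
  imports Defs "HOL-Real_Asymp.Real_Asymp"
begin

lemma set_integral_mono_set_nonneg:
  fixes f :: "'a \<Rightarrow> real"
  assumes f: "set_integrable M T f" "\<And>x. x \<in> T \<Longrightarrow> 0 \<le> f x" and S: "S \<in> sets M" "S \<subseteq> T"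
  shows "(LINT x:S|M. f x) \<le> (LINT x:T|M. f x)"
  using f set_integrable_subset[OF f(1) S] S unfolding set_lebesgue_integral_def set_integrable_def
  by (intro integral_mono) (auto simp: indicator_def)

lemma measure_mult_le_set_integral:
  fixes f :: "'a \<Rightarrow> real"
  assumes f: "set_integrable M T f" "\<And>x. x \<in> T \<Longrightarrow> 0 \<le> f x"
    and S: "S \<in> sets M" "S \<subseteq> T" "emeasure M S < \<infinity>" and m: "\<And>x. x \<in> S \<Longrightarrow> m \<le> f x"
  shows "measure M S * m \<le> (LINT x:T|M. f x)"
proof -
  have "measure M S * m = (LINT x:S|M. m)"
    using S by (simp add: set_integral_const less_top)
  also have "\<dots> \<le> (LINT x:S|M. f x)"
    using S m set_integrable_subset[OF f(1) S(1,2)] unfolding set_integrable_def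
    by (intro set_integral_mono) (auto simp: set_integrable_def intro!: integrable_scaleR_left integrable_real_indicator)
  also have "\<dots> \<le> (LINT x:T|M. f x)"
    using f S(1,2) by (rule set_integral_mono_set_nonneg)
  finally show ?thesis .
qed

section \<open>The radial profile of the Green kernel\<close>

definition green_profile :: "real \<Rightarrow> real \<Rightarrow> real \<Rightarrow> real" where
  "green_profile a m t = t powr (a - 1) * (t + 1) powr (- m / 2)"

definition green_profile_integral :: "real \<Rightarrow> real \<Rightarrow> real \<Rightarrow> real" where
  "green_profile_integral a m r = (LINT t:{0<..<r}|lborel. green_profile a m t)"

lemma set_integrable_powr_Ioi_dominator:
  fixes a :: real
  assumes "0 < a" "a < 1"
  shows "set_integrable lborel {0<..} (\<lambda>t. t powr (a - 1) * (1 + t) powr (- a - 1) + (1 + t) powr (a - 2))"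
proof -
  define H where "H t = t powr a * (1 + t) powr (- a) / a - (1 + t) powr (a - 1) / (1 - a)" for t :: real
  have "set_integrable lborel (einterval 0 \<infinity>)
      (\<lambda>t. t powr (a - 1) * (1 + t) powr (- a - 1) + (1 + t) powr (a - 2))"
  proof (rule interval_integral_FTC_nonneg(1)[where F = H and A = "- inverse (1 - a)" and B = "inverse a"])
    fix x :: real
    assume "0 < ereal x" "ereal x < \<infinity>"
    then have x: "0 < x" by simp
    have "(H has_real_derivative (a * x powr (a - 1) * (1 + x) powr (- a)
        + x powr a * (- a * (1 + x) powr (- a - 1))) / a - (a - 1) * (1 + x) powr (a - 1 - 1) / (1 - a)) (at x)"
      unfolding H_def using x assms by (auto intro!: derivative_eq_intros)
    moreover have "(a * x powr (a - 1) * (1 + x) powr (- a) + x powr a * (- a * (1 + x) powr (- a - 1))) / a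
        - (a - 1) * (1 + x) powr (a - 1 - 1) / (1 - a)
        = x powr (a - 1) * (1 + x) powr (- a - 1) + (1 + x) powr (a - 2)"
    proof -
      have "(1 + x) powr (- a) = (1 + x) * (1 + x) powr (- a - 1)"
        and "x powr a = x * x powr (a - 1)"
        using x by (simp_all add: powr_mult_base)
      then show ?thesis
        using assms x by (simp add: field_simps)
    qed
    ultimately show "(H has_real_derivative
        x powr (a - 1) * (1 + x) powr (- a - 1) + (1 + x) powr (a - 2)) (at x)"
      by simp
    show "isCont (\<lambda>t. t powr (a - 1) * (1 + t) powr (- a - 1) + (1 + t) powr (a - 2)) x"
      using x by (auto intro!: continuous_intros)
  next
    show "((H \<circ> real_of_ereal) \<longlongrightarrow> - inverse (1 - a)) (at_right 0)"
      unfolding H_def zero_ereal_def ereal_tendsto_simps using assms by real_asymp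
    show "((H \<circ> real_of_ereal) \<longlongrightarrow> inverse a) (at_left \<infinity>)"
      unfolding H_def ereal_tendsto_simps using assms by real_asymp
  qed auto
  then show ?thesis
    using einterval_eq_Ici[of 0] by (simp add: zero_ereal_def)
qed

lemma green_profile_le_dominator:
  fixes a m t :: real
  assumes a: "0 < a" "a < 1" and m: "2 \<le> m" and t: "0 < t"
  shows "green_profile a m t \<le> 4 * (t powr (a - 1) * (1 + t) powr (- a - 1) + (1 + t) powr (a - 2))"
proof (cases "t \<le> 1")
  case True
  have "(t + 1) powr (- m / 2) \<le> 1"
    using powr_mono[of "- m / 2" 0 "t + 1"] t m by auto
  then have "green_profile a m t \<le> t powr (a - 1)"
    unfolding green_profile_def using mult_left_mono[of _ 1 "t powr (a - 1)"] by simp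
  also have "\<dots> \<le> 4 * (t powr (a - 1) * (1 + t) powr (- a - 1))"
  proof -
    have "(2::real) powr (- 2) \<le> 2 powr (- a - 1)"
      using a by (intro powr_mono) auto
    also have "\<dots> \<le> (1 + t) powr (- a - 1)"
      using True t a by (intro powr_mono2') auto
    finally have "1 \<le> 4 * (1 + t) powr (- a - 1)"
      by (simp add: powr_minus power2_eq_square)
    then have "t powr (a - 1) * 1 \<le> t powr (a - 1) * (4 * (1 + t) powr (- a - 1))"
      by (rule mult_left_mono) simp
    then show ?thesis by (simp add: mult_ac)
  qed
  finally show ?thesis
    using powr_ge_zero[of "1 + t" "a - 2"] unfolding distrib_left by linarith
next
  case False
  have "t powr (a - 1) \<le> ((1 + t) / 2) powr (a - 1)"
    using False a by (intro powr_mono2') auto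
  also have "\<dots> = (1 + t) powr (a - 1) * 2 powr (1 - a)"
    by (simp add: powr_divide divide_powr_uminus)
  also have "\<dots> \<le> (1 + t) powr (a - 1) * 2"
    using a powr_mono[of "1 - a" 1 2] by (intro mult_left_mono) auto
  finally have "t powr (a - 1) \<le> 2 * (1 + t) powr (a - 1)" by simp
  moreover have "(t + 1) powr (- m / 2) \<le> (1 + t) powr (- 1)"
    using powr_mono[of "- m / 2" "- 1" "t + 1"] t m by (auto simp: add.commute)
  ultimately have "green_profile a m t \<le> 2 * (1 + t) powr (a - 1) * (1 + t) powr (- 1)"
    unfolding green_profile_def by (intro mult_mono) auto
  also have "\<dots> = 2 * (1 + t) powr (a - 2)"
    by (subst mult.assoc, subst powr_add[symmetric]) simp
  finally show ?thesis
    using powr_ge_zero[of t "a - 1"] powr_ge_zero[of "1 + t" "- a - 1"] powr_ge_zero[of "1 + t" "a - 2"]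
    unfolding distrib_left by (smt (verit) mult_nonneg_nonneg)
qed

lemma set_integrable_green_profile:
  fixes a m :: real
  assumes a: "0 < a" "a < 1" and m: "2 \<le> m"
  shows "set_integrable lborel {0<..} (green_profile a m)"
proof (rule set_integrable_bound[OF set_integrable_mult_right[OF set_integrable_powr_Ioi_dominator[OF a], of 4]])
  show "set_borel_measurable lborel {0<..} (green_profile a m)"
    unfolding set_borel_measurable_def green_profile_def by measurable
  show "AE t in lborel. t \<in> {0<..} \<longrightarrow> norm (green_profile a m t)
      \<le> norm (4 * (t powr (a - 1) * (1 + t) powr (- a - 1) + (1 + t) powr (a - 2)))"
    using green_profile_le_dominator[OF a m]
    by (auto intro!: AE_I2 simp: green_profile_def abs_of_nonneg)
qed

lemma set_integral_green_profile_mono: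
  fixes a m :: real
  assumes a: "0 < a" "a < 1" and m: "2 \<le> m"
    and S: "S \<in> sets lborel" "S \<subseteq> T" and T: "T \<in> sets lborel" "T \<subseteq> {0<..}"
  shows "(LINT t:S|lborel. green_profile a m t) \<le> (LINT t:T|lborel. green_profile a m t)"
proof (rule set_integral_mono_set_nonneg)
  show "set_integrable lborel T (green_profile a m)"
    using set_integrable_subset[OF set_integrable_green_profile[OF a m] T] .
qed (use S T in \<open>auto simp: green_profile_def\<close>)

lemma mono_green_profile_integral:
  fixes a m :: real
  assumes "0 < a" "a < 1" "2 \<le> m"
  shows "mono (green_profile_integral a m)"
  unfolding mono_def green_profile_integral_def
  using assms by (auto intro!: set_integral_green_profile_mono)

lemma green_profile_integral_le_total:
  fixes a m :: real
  assumes "0 < a" "a < 1" "2 \<le> m"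
  shows "green_profile_integral a m r \<le> (LINT t:{0<..}|lborel. green_profile a m t)"
  unfolding green_profile_integral_def
  using assms by (auto intro!: set_integral_green_profile_mono)

lemma green_profile_integral_nonneg: "0 \<le> green_profile_integral a m r"
  unfolding green_profile_integral_def green_profile_def set_lebesgue_integral_def
  by (intro Bochner_Integration.integral_nonneg) (auto simp: indicator_def)

lemma set_integral_powr_Ioo:
  fixes a R :: real
  assumes a: "0 < a" and R: "0 < R"
  shows "set_integrable lborel {0<..<R} (\<lambda>t. t powr (a - 1))"
    and "(LINT t:{0<..<R}|lborel. t powr (a - 1)) = R powr a / a"
proof -
  define F where "F = (\<lambda>t::real. t powr a / a)"
  have "0 < ereal R" using R by simp
  moreover have "(F has_real_derivative t powr (a - 1)) (at t)" if "0 < ereal t" for t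
    using that a by (auto simp: F_def intro!: derivative_eq_intros)
  moreover have "isCont (\<lambda>t. t powr (a - 1)) t" if "0 < ereal t" for t
    using that by (auto intro!: continuous_intros)
  moreover have "((F \<circ> real_of_ereal) \<longlongrightarrow> 0) (at_right 0)"
    unfolding F_def zero_ereal_def ereal_tendsto_simps using a by real_asymp
  moreover have "((F \<circ> real_of_ereal) \<longlongrightarrow> R powr a / a) (at_left (ereal R))"
    unfolding F_def ereal_tendsto_simps using a R by (auto intro!: tendsto_eq_intros)
  ultimately have FTC: "set_integrable lborel (einterval 0 (ereal R)) (\<lambda>t. t powr (a - 1))
      \<and> (LBINT t=0..ereal R. t powr (a - 1)) = R powr a / a - 0"
    using interval_integral_FTC_nonneg[where F = F and f = "\<lambda>t. t powr (a - 1)" and a = 0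
        and b = "ereal R" and A = 0 and B = "R powr a / a"] by auto
  have I: "einterval 0 (ereal R) = {0<..<R}"
    using einterval_eq_Icc[of 0 R] by (simp add: zero_ereal_def)
  show "set_integrable lborel {0<..<R} (\<lambda>t. t powr (a - 1))"
    using FTC I by simp
  show "(LINT t:{0<..<R}|lborel. t powr (a - 1)) = R powr a / a"
    using FTC R interval_integral_Ioo[of 0 "ereal R" "\<lambda>t. t powr (a - 1)"] by (simp add: zero_ereal_def)
qed

lemma green_profile_integral_ge:
  fixes a m R r :: real
  assumes a: "0 < a" "a < 1" and m: "2 \<le> m" and R: "0 < R" "R \<le> 1" "R \<le> r"
  shows "2 powr (- m / 2) * (R powr a / a) \<le> green_profile_integral a m r"
proof -
  have "2 powr (- m / 2) * (R powr a / a) = (LINT t:{0<..<R}|lborel. 2 powr (- m / 2) * t powr (a - 1))"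
    using set_integral_powr_Ioo[OF a(1) R(1)] by simp
  also have "\<dots> \<le> green_profile_integral a m R"
    unfolding green_profile_integral_def
  proof (rule set_integral_mono)
    show "set_integrable lborel {0<..<R} (\<lambda>t. 2 powr (- m / 2) * t powr (a - 1))"
      using set_integral_powr_Ioo[OF a(1) R(1)] by simp
    show "set_integrable lborel {0<..<R} (green_profile a m)"
      by (rule set_integrable_subset[OF set_integrable_green_profile[OF a m]]) auto
    fix t :: real
    assume t: "t \<in> {0<..<R}"
    then have "2 powr (- m / 2) \<le> (t + 1) powr (- m / 2)"
      using R m by (intro powr_mono2') auto
    then show "2 powr (- m / 2) * t powr (a - 1) \<le> green_profile a m t"
      unfolding green_profile_def by (simp add: mult.commute mult_left_mono)
  qed
  also have "\<dots> \<le> green_profile_integral a m r"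
    using mono_green_profile_integral[OF a m] R(3) by (rule monoD)
  finally show ?thesis .
qed

section \<open>Integrability of powers of the distance\<close>

lemma integrableI_geometric_shells:
  fixes f :: "'a::euclidean_space \<Rightarrow> real" and A :: "nat \<Rightarrow> 'a set" and M :: "nat \<Rightarrow> real"
  assumes f: "f \<in> borel_measurable lborel" "\<And>y. 0 \<le> f y"
    and A: "\<And>k. A k \<in> sets lborel" "\<And>k. bounded (A k)"
    and cover: "\<And>y. f y \<noteq> 0 \<Longrightarrow> \<exists>k. y \<in> A k"
    and M: "\<And>k y. y \<in> A k \<Longrightarrow> f y \<le> M k" "\<And>k. 0 \<le> M k"
    and geometric: "\<And>k. M k * measure lborel (A k) \<le> C * q ^ k" "0 \<le> q" "q < 1"
  shows "integrable lborel f"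
proof (rule integrableI_bounded[OF f(1)])
  have finite: "emeasure lborel (A k) < \<infinity>" for k
    using A by (intro emeasure_bounded_finite) auto
  have summable: "summable (\<lambda>k. M k * measure lborel (A k))"
    using geometric M(2)
    by (intro summable_comparison_test_ev[OF _ summable_mult[OF summable_geometric]] always_eventually)
      (auto simp: abs_of_nonneg)
  have "ennreal (norm (f y)) \<le> (\<Sum>k. ennreal (M k) * indicator (A k) y)" for y
  proof (cases "f y = 0")
    case False
    then obtain k where k: "y \<in> A k" using cover by blast
    have "ennreal (norm (f y)) \<le> ennreal (M k) * indicator (A k) y"
      using k M(1)[OF k] f(2)[of y] by (simp add: ennreal_leI)
    also have "\<dots> \<le> (\<Sum>i. ennreal (M i) * indicator (A i) y)"
      by (rule order_trans[OF _ sum_le_suminf[where I = "{k}"]]) (auto simp del: sum_mult_indicator)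
    finally show ?thesis .
  qed simp
  then have "(\<integral>\<^sup>+ y. ennreal (norm (f y)) \<partial>lborel) \<le> (\<integral>\<^sup>+ y. (\<Sum>k. ennreal (M k) * indicator (A k) y) \<partial>lborel)"
    by (rule nn_integral_mono)
  also have "\<dots> = (\<Sum>k. \<integral>\<^sup>+ y. ennreal (M k) * indicator (A k) y \<partial>lborel)"
    using A(1) by (intro nn_integral_suminf) auto
  also have "\<dots> = (\<Sum>k. ennreal (M k * measure lborel (A k)))"
    using A(1) finite M(2)
    by (simp add: nn_integral_cmult_indicator emeasure_eq_ennreal_measure ennreal_mult less_top)
  also have "\<dots> = ennreal (\<Sum>k. M k * measure lborel (A k))"
    using M(2) summable by (intro suminf_ennreal2) auto
  finally show "(\<integral>\<^sup>+ y. ennreal (norm (f y)) \<partial>lborel) < \<infinity>"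
    by (simp add: le_less_trans)
qed

lemma ex_dyadic_shell:
  fixes r d :: real
  assumes "0 < r" "r \<le> d"
  shows "\<exists>k. r * 2 ^ k \<le> d \<and> d < r * 2 ^ Suc k"
proof -
  define k where "k = nat \<lfloor>log 2 (d / r)\<rfloor>"
  have "0 \<le> log 2 (d / r)" using assms by simp
  then have "\<lfloor>log 2 (d / r)\<rfloor> = int k" unfolding k_def by simp
  then have "2 powr real k \<le> d / r \<and> d / r < 2 powr (real k + 1)"
    using floor_log_eq_powr_iff[of "d / r" 2 "int k"] assms by simp
  then have "2 ^ k \<le> d / r \<and> d / r < 2 ^ Suc k"
    by (simp add: powr_add powr_realpow)
  then show ?thesis
    using assms by (auto simp: field_simps)
qed

lemma measure_le_cball:
  fixes c :: "'a::euclidean_space"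
  assumes "A \<subseteq> cball c r" "A \<in> sets lborel" "0 \<le> r"
  shows "measure lborel A \<le> unit_ball_vol (real DIM('a)) * r ^ DIM('a)"
  using measure_mono_fmeasurable[OF assms(1,2)] emeasure_lborel_cball_finite[of c r]
    content_cball[OF assms(3), of c]
  by (simp add: fmeasurable_def)

lemma two_power_powr: "((2::real) ^ k) powr b = (2 powr b) ^ k"
  by (simp add: powr_power powr_powr mult.commute flip: powr_realpow)

lemma integrable_ball_dist_powr:
  fixes c :: "'a::euclidean_space" and r \<beta> :: real
  assumes r: "0 < r" and \<beta>: "0 \<le> \<beta>" "\<beta> < DIM('a)"
  shows "integrable lborel (\<lambda>y. indicator (ball c r) y * dist y c powr (- \<beta>))"
proof (rule integrableI_geometric_shells[where A = "\<lambda>k. cball c (r / 2 ^ k) - cball c (r / 2 ^ Suc k)"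
      and M = "\<lambda>k. (r / 2 ^ Suc k) powr (- \<beta>)" and q = "2 powr \<beta> / 2 ^ DIM('a)"
      and C = "unit_ball_vol (real DIM('a)) * (r / 2) powr (- \<beta>) * r ^ DIM('a)"])
  fix y
  assume "indicator (ball c r) y * dist y c powr (- \<beta>) \<noteq> 0"
  then have "0 < dist y c" "dist y c < r"
    by (auto simp: indicator_def dist_commute split: if_splits)
  then obtain k where "dist y c * 2 ^ k \<le> r" "r < dist y c * 2 ^ Suc k"
    using ex_dyadic_shell[of "dist y c" r] by auto
  then have "dist y c \<le> r / 2 ^ k" "r / 2 ^ Suc k < dist y c"
    by (simp_all add: pos_le_divide_eq pos_divide_less_eq del: power_Suc)
  then show "\<exists>k. y \<in> cball c (r / 2 ^ k) - cball c (r / 2 ^ Suc k)"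
    by (auto simp: dist_commute)
next
  fix k y
  assume "y \<in> cball c (r / 2 ^ k) - cball c (r / 2 ^ Suc k)"
  then have "dist y c powr (- \<beta>) \<le> (r / 2 ^ Suc k) powr (- \<beta>)"
    using r \<beta> by (intro powr_mono2') (auto simp: dist_commute)
  then show "indicator (ball c r) y * dist y c powr (- \<beta>) \<le> (r / 2 ^ Suc k) powr (- \<beta>)"
    by (simp add: indicator_def)
next
  fix k
  have "(r / 2 ^ Suc k) powr (- \<beta>) = ((r / 2) / 2 ^ k) powr (- \<beta>)"
    by simp
  also have "\<dots> = (r / 2) powr (- \<beta>) * (2 powr \<beta>) ^ k"
    by (simp only: powr_divide powr_minus_divide divide_divide_eq_right two_power_powr) simp
  finally have "(r / 2 ^ Suc k) powr (- \<beta>) * (unit_ball_vol (real DIM('a)) * (r / 2 ^ k) ^ DIM('a))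
      = unit_ball_vol (real DIM('a)) * (r / 2) powr (- \<beta>) * r ^ DIM('a) * (2 powr \<beta> / 2 ^ DIM('a)) ^ k"
    by (simp add: power_divide power_mult[symmetric] mult.commute)
  moreover have "measure lborel (cball c (r / 2 ^ k) - cball c (r / 2 ^ Suc k))
      \<le> unit_ball_vol (real DIM('a)) * (r / 2 ^ k) ^ DIM('a)"
    using r by (intro measure_le_cball[where c = c]) auto
  ultimately show "(r / 2 ^ Suc k) powr (- \<beta>) * measure lborel (cball c (r / 2 ^ k) - cball c (r / 2 ^ Suc k))
      \<le> unit_ball_vol (real DIM('a)) * (r / 2) powr (- \<beta>) * r ^ DIM('a) * (2 powr \<beta> / 2 ^ DIM('a)) ^ k"
    by (metis mult_left_mono powr_ge_zero)
next
  show "2 powr \<beta> / 2 ^ DIM('a) < 1"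
    using \<beta> powr_less_mono[of \<beta> "real DIM('a)" 2] by (simp add: powr_realpow)
  show "(\<lambda>y. indicator (ball c r) y * dist y c powr (- \<beta>)) \<in> borel_measurable lborel"
    by (intro borel_measurable_times borel_measurable_indicator powr_real_measurable borel_measurable_dist) auto
qed auto

lemma integrable_outside_ball_dist_powr:
  fixes c :: "'a::euclidean_space" and r \<beta> :: real
  assumes r: "0 < r" and \<beta>: "DIM('a) < \<beta>"
  shows "integrable lborel (\<lambda>y. indicator (- ball c r) y * dist y c powr (- \<beta>))"
proof (rule integrableI_geometric_shells[where A = "\<lambda>k. ball c (r * 2 ^ Suc k) - ball c (r * 2 ^ k)"
      and M = "\<lambda>k. (r * 2 ^ k) powr (- \<beta>)" and q = "2 ^ DIM('a) / 2 powr \<beta>"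
      and C = "unit_ball_vol (real DIM('a)) * r powr (- \<beta>) * (2 * r) ^ DIM('a)"])
  fix y
  assume "indicator (- ball c r) y * dist y c powr (- \<beta>) \<noteq> 0"
  then have "r \<le> dist y c"
    by (auto simp: indicator_def dist_commute split: if_splits)
  then obtain k where "r * 2 ^ k \<le> dist y c" "dist y c < r * 2 ^ Suc k"
    using ex_dyadic_shell r by blast
  then show "\<exists>k. y \<in> ball c (r * 2 ^ Suc k) - ball c (r * 2 ^ k)"
    by (auto simp: dist_commute)
next
  fix k y
  assume "y \<in> ball c (r * 2 ^ Suc k) - ball c (r * 2 ^ k)"
  then have "dist y c powr (- \<beta>) \<le> (r * 2 ^ k) powr (- \<beta>)"
    using r \<beta> by (intro powr_mono2') (auto simp: dist_commute)
  then show "indicator (- ball c r) y * dist y c powr (- \<beta>) \<le> (r * 2 ^ k) powr (- \<beta>)"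
    by (simp add: indicator_def)
next
  fix k
  have "(r * 2 ^ k) powr (- \<beta>) = r powr (- \<beta>) / (2 powr \<beta>) ^ k"
    using r by (simp add: powr_mult powr_minus divide_inverse two_power_powr)
  then have "(r * 2 ^ k) powr (- \<beta>) * (unit_ball_vol (real DIM('a)) * (r * 2 ^ Suc k) ^ DIM('a))
      = unit_ball_vol (real DIM('a)) * r powr (- \<beta>) * (2 * r) ^ DIM('a) * (2 ^ DIM('a) / 2 powr \<beta>) ^ k"
    by (simp add: power_mult_distrib power_mult[symmetric] power_divide mult.commute)
  moreover have "measure lborel (ball c (r * 2 ^ Suc k) - ball c (r * 2 ^ k))
      \<le> unit_ball_vol (real DIM('a)) * (r * 2 ^ Suc k) ^ DIM('a)"
    using r by (intro measure_le_cball[where c = c]) auto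
  ultimately show "(r * 2 ^ k) powr (- \<beta>) * measure lborel (ball c (r * 2 ^ Suc k) - ball c (r * 2 ^ k))
      \<le> unit_ball_vol (real DIM('a)) * r powr (- \<beta>) * (2 * r) ^ DIM('a) * (2 ^ DIM('a) / 2 powr \<beta>) ^ k"
    by (metis mult_left_mono powr_ge_zero)
next
  show "2 ^ DIM('a) / 2 powr \<beta> < 1"
    using \<beta> powr_less_mono[of "real DIM('a)" \<beta> 2] by (simp add: powr_realpow)
  show "(\<lambda>y. indicator (- ball c r) y * dist y c powr (- \<beta>)) \<in> borel_measurable lborel"
    by (intro borel_measurable_times borel_measurable_indicator powr_real_measurable borel_measurable_dist) auto
qed auto

section \<open>Positivity of the normalising constant\<close>

lemma one_minus_cos_le: "1 - cos (t::real) \<le> t\<^sup>2 / 2"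
proof -
  have "1 - cos t = 2 * (sin (t / 2))\<^sup>2"
    using cos_double_sin[of "t / 2"] by simp
  also have "\<dots> \<le> 2 * (t / 2)\<^sup>2"
    using abs_sin_x_le_abs_x[of "t / 2"] by (metis abs_le_square_iff mult_left_mono zero_le_numeral)
  finally show ?thesis by (simp add: power2_eq_square)
qed

lemma one_minus_cos_div_powr_le:
  fixes z :: "'a::real_normed_vector" and t p :: real
  assumes t: "\<bar>t\<bar> \<le> norm z"
  shows "(1 - cos t) / norm z powr p \<le> 1 / 2 * (indicator (ball 0 1) z * dist z 0 powr (- (p - 2)))
    + 2 * (indicator (- ball 0 1) z * dist z 0 powr (- p))"
proof (cases "z = 0")
  case False
  have quotient: "(1 - cos t) / norm z powr p = (1 - cos t) * norm z powr (- p)"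
    by (simp add: powr_minus divide_inverse)
  show ?thesis
  proof (cases "norm z < 1")
    case True
    have "t\<^sup>2 \<le> (norm z)\<^sup>2"
      using t by (metis abs_le_square_iff abs_norm_cancel)
    then have "1 - cos t \<le> norm z powr 2 / 2"
      using one_minus_cos_le[of t] False by (simp add: powr_realpow)
    then have "(1 - cos t) * norm z powr (- p) \<le> norm z powr 2 / 2 * norm z powr (- p)"
      by (rule mult_right_mono) simp
    also have "\<dots> = 1 / 2 * norm z powr (- (p - 2))"
      by (simp add: powr_add[symmetric] del: powr_numeral)
    finally show ?thesis
      using True quotient by (simp add: dist_norm)
  next
    case False
    have "(1 - cos t) * norm z powr (- p) \<le> 2 * norm z powr (- p)"
      using cos_ge_minus_one[of t] by (intro mult_right_mono) auto
    then show ?thesis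
      using False quotient by (simp add: dist_norm)
  qed
qed simp

lemma integrable_frac_laplacian_kernel:
  fixes k :: "'n::finite" and \<alpha> :: real
  assumes \<alpha>: "0 < \<alpha>" "\<alpha> < 1" and N: "CARD('n) \<ge> 2"
  shows "integrable lborel (\<lambda>z::real^'n. (1 - cos (z $ k)) / norm z powr (real CARD('n) + 2 * \<alpha>))"
proof (rule Bochner_Integration.integrable_bound)
  define p where "p = real CARD('n) + 2 * \<alpha>"
  define g where "g z = 1 / 2 * (indicator (ball 0 1) z * dist z 0 powr (- (p - 2)))
      + 2 * (indicator (- ball 0 1) z * dist z 0 powr (- p))" for z :: "real^'n"
  show "integrable lborel g"
    unfolding g_def using \<alpha> N
    by (intro Bochner_Integration.integrable_add integrable_mult_right integrable_ball_dist_powr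
        integrable_outside_ball_dist_powr) (auto simp: p_def)
  show "(\<lambda>z::real^'n. (1 - cos (z $ k)) / norm z powr (real CARD('n) + 2 * \<alpha>)) \<in> borel_measurable lborel"
    by measurable
  have "norm ((1 - cos (z $ k)) / norm z powr p) \<le> norm (g z)" for z
    using one_minus_cos_div_powr_le[OF component_le_norm_cart[of z k], of p]
    by (simp add: g_def abs_of_nonneg)
  then show "AE z in lborel. norm ((1 - cos (z $ k)) / norm z powr (real CARD('n) + 2 * \<alpha>)) \<le> norm (g z)"
    by (simp add: p_def)
qed

lemma c_frac_pos:
  fixes k :: "'n::finite" and \<alpha> :: real
  assumes \<alpha>: "0 < \<alpha>" "\<alpha> < 1" and N: "CARD('n) \<ge> 2"
  shows "0 < c_frac k \<alpha>"
proof -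
  define p where "p = real CARD('n) + 2 * \<alpha>"
  define f where "f = (\<lambda>z::real^'n. (1 - cos (z $ k)) / norm z powr p)"
  define m where "m = (1 - cos (1 / 2)) / (3 / 2) powr p"
  define B where "B = ball (axis k 1 :: real^'n) (1 / 2)"
  have cos_half: "cos (1 / 2 :: real) < 1"
    using cos_monotone_0_pi[of 0 "1 / 2"] pi_gt3 by simp
  have "m \<le> f z" if "z \<in> B" for z
  proof -
    have "norm (z - axis k 1) < 1 / 2"
      using that by (simp add: B_def dist_norm norm_minus_commute)
    then have zk: "\<bar>z $ k - 1\<bar> < 1 / 2" and "norm z < 3 / 2"
      using component_le_norm_cart[of "z - axis k 1" k] norm_triangle_lt[of "z - axis k 1" "axis k 1" "3 / 2"]
      by auto
    moreover have "1 / 2 < norm z"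
      using component_le_norm_cart[of z k] zk by linarith
    moreover have "cos (z $ k) \<le> cos (1 / 2)"
      using zk pi_gt3 by (intro cos_monotone_0_pi_le) linarith+
    ultimately show "m \<le> f z"
      unfolding m_def f_def p_def using \<alpha> cos_half
      by (intro frac_le powr_mono2) auto
  qed
  moreover have "integrable lborel f"
    unfolding f_def p_def by (rule integrable_frac_laplacian_kernel[OF \<alpha> N])
  ultimately have "measure lborel B * m \<le> (LINT z:UNIV|lborel. f z)"
    using emeasure_lborel_ball_finite[of "axis k 1" "1 / 2"]
    by (intro measure_mult_le_set_integral) (auto simp: B_def f_def set_integrable_def)
  moreover have "0 < measure lborel B * m"
    using cos_half content_ball_pos[of "1 / 2" "axis k 1"] by (simp add: m_def B_def)
  ultimately show ?thesis
    unfolding c_frac_def f_def p_def by (simp add: set_lebesgue_integral_def)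
qed

section \<open>Bounds for the Green kernel\<close>

lemma kappa_green_pos:
  assumes "0 < N" "0 < \<alpha>"
  shows "0 < kappa_green N \<alpha>"
proof -
  have "0 < Gamma \<alpha>" "0 < Gamma (real N / 2)"
    using assms by (simp_all add: Gamma_real_pos)
  then show ?thesis
    unfolding kappa_green_def by (intro divide_pos_pos mult_pos_pos) auto
qed

lemma interval_integral_eq_set_integral_Ioo:
  fixes R :: real
  assumes "0 \<le> R"
  shows "(LBINT t=0..R. f t) = (LINT t:{0<..<R}|lborel. f t)"
  using interval_integral_Ioo[of 0 "ereal R" f] assms by (simp add: zero_ereal_def)

lemma green_ball_eq:
  fixes e x y :: "real^'n::finite"
  shows "green_ball \<alpha> e x y =
    (if x \<in> ball e 1 \<and> y \<in> ball e 1 \<and> x \<noteq> y then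
       kappa_green CARD('n) \<alpha> * dist x y powr (2 * \<alpha> - real CARD('n)) *
       green_profile_integral \<alpha> (real CARD('n)) ((1 - (dist x e)\<^sup>2) * (1 - (dist y e)\<^sup>2) / (dist x y)\<^sup>2)
     else 0)"
proof (cases "x \<in> ball e 1 \<and> y \<in> ball e 1")
  case True
  then have "(dist x e)\<^sup>2 < 1" "(dist y e)\<^sup>2 < 1"
    by (simp_all add: dist_commute abs_square_less_1)
  then have "0 \<le> (1 - (dist x e)\<^sup>2) * (1 - (dist y e)\<^sup>2) / (dist x y)\<^sup>2"
    by simp
  then show ?thesis
    unfolding green_ball_def green_profile_integral_def green_profile_def
    by (simp add: interval_integral_eq_set_integral_Ioo)
qed (auto simp: green_ball_def)

lemma green_ball_nonneg: "0 < \<alpha> \<Longrightarrow> 0 \<le> green_ball \<alpha> e x y"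
  unfolding green_ball_eq
  by (auto intro!: mult_nonneg_nonneg less_imp_le[OF kappa_green_pos] green_profile_integral_nonneg)

lemma borel_measurable_green_ball:
  fixes e x :: "real^'n::finite"
  assumes "0 < \<alpha>" "\<alpha> < 1" "CARD('n) \<ge> 2"
  shows "green_ball \<alpha> e x \<in> borel_measurable lborel"
proof -
  have [measurable]: "green_profile_integral \<alpha> (real CARD('n)) \<in> borel_measurable borel"
    using assms by (intro borel_measurable_mono mono_green_profile_integral) auto
  have [measurable]: "Measurable.pred borel (\<lambda>y. y \<in> ball e 1)" "Measurable.pred borel (\<lambda>y. x \<noteq> y)"
    unfolding pred_def by (auto simp: Collect_neg_eq)
  show ?thesis
    unfolding green_ball_eq by measurable
qed

lemma green_ball_le_dist_powr:
  fixes e x y :: "real^'n::finite"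
  assumes \<alpha>: "0 < \<alpha>" "\<alpha> < 1" and N: "CARD('n) \<ge> 2"
  shows "green_ball \<alpha> e x y \<le> kappa_green CARD('n) \<alpha> *
    (LINT t:{0<..}|lborel. green_profile \<alpha> (real CARD('n)) t) * dist x y powr (2 * \<alpha> - real CARD('n))"
proof -
  have total: "green_profile_integral \<alpha> (real CARD('n)) r \<le> (LINT t:{0<..}|lborel. green_profile \<alpha> (real CARD('n)) t)" for r
    using \<alpha> N by (intro green_profile_integral_le_total) auto
  have "0 \<le> (LINT t:{0<..}|lborel. green_profile \<alpha> (real CARD('n)) t)"
    using total[of 0] green_profile_integral_nonneg[of \<alpha> "real CARD('n)" 0] by linarith
  then show ?thesis
    unfolding green_ball_eq using kappa_green_pos[of "CARD('n)" \<alpha>] \<alpha> total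
    by (auto simp: mult_ac intro!: mult_left_mono)
qed

lemma green_ball_ge_boundary_powr:
  fixes e x :: "real^'n::finite"
  assumes \<alpha>: "0 < \<alpha>" "\<alpha> < 1" and N: "CARD('n) \<ge> 2" and x: "x \<in> ball e 1"
  obtains C where "0 < C"
    and "\<And>y. y \<in> ball e 1 \<Longrightarrow> y \<noteq> x \<Longrightarrow> C * (1 - (dist y e)\<^sup>2) powr \<alpha> \<le> green_ball \<alpha> e x y"
proof
  define N where "N = real CARD('n)"
  define P where "P = 1 - (dist x e)\<^sup>2"
  have "(dist x e)\<^sup>2 < 1"
    using x by (simp add: dist_commute abs_square_less_1)
  then have P: "0 < P" "P \<le> 1"
    by (auto simp: P_def)
  show "0 < kappa_green CARD('n) \<alpha> * 2 powr (2 * \<alpha> - N) * 2 powr (- N / 2) * ((P / 4) powr \<alpha> / \<alpha>)"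
    using kappa_green_pos[of "CARD('n)" \<alpha>] \<alpha> P by simp
  fix y
  assume y: "y \<in> ball e 1" "y \<noteq> x"
  define q where "q = 1 - (dist y e)\<^sup>2"
  define d where "d = dist x y"
  have "(dist y e)\<^sup>2 < 1"
    using y by (simp add: dist_commute abs_square_less_1)
  then have q: "0 < q" "q \<le> 1"
    by (auto simp: q_def)
  have d: "0 < d" "d < 2"
    using x y dist_triangle[of x y e] by (auto simp: d_def dist_commute)
  then have "d\<^sup>2 \<le> 4"
    using power_mono[of d 2 2] by simp
  then have "P * q / 4 \<le> P * q / d\<^sup>2"
    using P q d by (intro divide_left_mono) auto
  then have profile:
    "2 powr (- N / 2) * ((P * q / 4) powr \<alpha> / \<alpha>) \<le> green_profile_integral \<alpha> N (P * q / d\<^sup>2)"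
    using \<alpha> N P q mult_le_one[of P q] by (intro green_profile_integral_ge) (auto simp: N_def)
  have "2 powr (2 * \<alpha> - N) \<le> d powr (2 * \<alpha> - N)"
    using d \<alpha> N by (intro powr_mono2') (auto simp: N_def)
  then have "kappa_green CARD('n) \<alpha> * 2 powr (2 * \<alpha> - N) * (2 powr (- N / 2) * ((P * q / 4) powr \<alpha> / \<alpha>))
      \<le> kappa_green CARD('n) \<alpha> * d powr (2 * \<alpha> - N) * green_profile_integral \<alpha> N (P * q / d\<^sup>2)"
    using profile kappa_green_pos[of "CARD('n)" \<alpha>] \<alpha>
    by (intro mult_mono) auto
  also have "\<dots> = green_ball \<alpha> e x y"
    unfolding green_ball_eq using x y by (simp add: N_def P_def q_def d_def)
  finally show "kappa_green CARD('n) \<alpha> * 2 powr (2 * \<alpha> - N) * 2 powr (- N / 2) * ((P / 4) powr \<alpha> / \<alpha>)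
      * (1 - (dist y e)\<^sup>2) powr \<alpha> \<le> green_ball \<alpha> e x y"
    using P q powr_mult[of "P / 4" q \<alpha>] by (simp add: q_def mult_ac)
qed

section \<open>The potential of the boundary singularity\<close>

lemma norm_add_scaleR_unit_ge:
  fixes e y :: "'a::real_inner"
  assumes e: "norm e = 1" and y: "y \<in> ball e 1" and s: "0 \<le> s"
  shows "s \<le> norm (y + s *\<^sub>R e)"
proof -
  have "norm (y - e) < 1"
    using y by (simp add: dist_norm norm_minus_commute)
  then have "(norm (y - e))\<^sup>2 < 1"
    by (simp add: abs_square_less_1)
  moreover have "2 * (y \<bullet> e) = (norm y)\<^sup>2 + 1 - (norm (y - e))\<^sup>2"
    using dot_norm_neg[of y e] e by simp
  ultimately have "0 < y \<bullet> e"
    using zero_le_power2[of "norm y"] by linarith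
  then have "s \<le> (y + s *\<^sub>R e) \<bullet> e"
    using e by (simp add: inner_add_left dot_square_norm)
  also have "\<dots> \<le> norm (y + s *\<^sub>R e)"
    using norm_cauchy_schwarz[of "y + s *\<^sub>R e" e] e by simp
  finally show ?thesis .
qed

lemma small_ball_near_boundary:
  fixes e y :: "'a::real_normed_vector"
  assumes e: "norm e = 1" and s: "0 < s" "s \<le> 1" and y: "dist y (s *\<^sub>R e) < s / 2"
  shows "y \<in> ball e 1" "s / 2 \<le> 1 - (dist y e)\<^sup>2" "norm (y + s *\<^sub>R e) < 5 / 2 * s" "norm y < 3 / 2 * s"
proof -
  have "s *\<^sub>R e - e = (s - 1) *\<^sub>R e"
    by (simp add: algebra_simps)
  then have "dist (s *\<^sub>R e) e = 1 - s"
    using e s by (simp add: dist_norm)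
  then have "dist y e < 1 - s / 2"
    using dist_triangle[of y e "s *\<^sub>R e"] y by linarith
  then show "y \<in> ball e 1"
    using s by (simp add: dist_commute)
  have "(dist y e)\<^sup>2 \<le> (1 - s / 2)\<^sup>2"
    using \<open>dist y e < 1 - s / 2\<close> by (intro power_mono) auto
  also have "\<dots> \<le> 1 - s / 2"
    using s by (simp add: power2_eq_square algebra_simps mult_le_cancel_left1)
  finally show "s / 2 \<le> 1 - (dist y e)\<^sup>2"
    by simp
  have "norm (y + s *\<^sub>R e) \<le> norm (y - s *\<^sub>R e) + norm (s *\<^sub>R e + s *\<^sub>R e)"
    using norm_triangle_ineq[of "y - s *\<^sub>R e" "s *\<^sub>R e + s *\<^sub>R e"] by (simp add: algebra_simps)
  also have "\<dots> \<le> norm (y - s *\<^sub>R e) + 2 * s"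
    using norm_triangle_ineq[of "s *\<^sub>R e" "s *\<^sub>R e"] e s by simp
  finally show "norm (y + s *\<^sub>R e) < 5 / 2 * s"
    using y e s by (simp add: dist_norm)
  have "norm y \<le> norm (y - s *\<^sub>R e) + norm (s *\<^sub>R e)"
    using norm_triangle_sub[of y "s *\<^sub>R e"] by linarith
  then show "norm y < 3 / 2 * s"
    using y e s by (simp add: dist_norm)
qed

lemma small_ball_contribution_eq:
  fixes s V C c a :: real and n :: nat
  assumes "0 < s"
  shows "V * (s / 2) ^ n * (C * (s / 2) powr a * (c / ((5 / 2) powr (n + 2 * a) * s powr (n + 2 * a))))
    = V * C * c / (2 powr (n + a) * (5 / 2) powr (n + 2 * a)) * s powr (- a)"
proof -
  have "(s / 2) ^ n * (s / 2) powr a / s powr (n + 2 * a) = s powr (n + a) / s powr (n + 2 * a) / 2 powr (n + a)"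
    using assms by (simp add: powr_add powr_divide flip: powr_realpow)
  also have "\<dots> = s powr (- a) / 2 powr (n + a)"
    by (simp flip: powr_diff)
  finally have scaling: "(s / 2) ^ n * (s / 2) powr a / s powr (n + 2 * a) = s powr (- a) / 2 powr (n + a)" .
  have "V * (s / 2) ^ n * (C * (s / 2) powr a * (c / ((5 / 2) powr (n + 2 * a) * s powr (n + 2 * a))))
      = V * C * c / (5 / 2) powr (n + 2 * a) * ((s / 2) ^ n * (s / 2) powr a / s powr (n + 2 * a))"
    by (simp add: divide_simps)
  also have "\<dots> = V * C * c / (2 powr (n + a) * (5 / 2) powr (n + 2 * a)) * s powr (- a)"
    unfolding scaling by (simp add: divide_simps)
  finally show ?thesis .
qed

lemma set_integrable_green_ball_mult:
  fixes e x :: "real^'n::finite" and h :: "real^'n \<Rightarrow> real"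
  assumes \<alpha>: "0 < \<alpha>" "\<alpha> < 1" and N: "CARD('n) \<ge> 2" and x: "x \<in> ball e 1"
    and h: "h \<in> borel_measurable lborel" "\<And>y. y \<in> ball e 1 \<Longrightarrow> \<bar>h y\<bar> \<le> H"
  shows "set_integrable lborel (ball e 1) (\<lambda>y. green_ball \<alpha> e x y * h y)"
proof (rule set_integrable_bound)
  define K where "K = kappa_green CARD('n) \<alpha> * (LINT t:{0<..}|lborel. green_profile \<alpha> (real CARD('n)) t)"
  define g where "g y = H * K * (indicator (ball x 2) y * dist y x powr (- (real CARD('n) - 2 * \<alpha>)))"
    for y :: "real^'n"
  show "set_integrable lborel (ball e 1) g"
    unfolding set_integrable_def g_def using \<alpha> N
    by (intro integrable_mult_indicator integrable_mult_right integrable_ball_dist_powr) auto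
  show "set_borel_measurable lborel (ball e 1) (\<lambda>y. green_ball \<alpha> e x y * h y)"
    unfolding set_borel_measurable_def using borel_measurable_green_ball[OF \<alpha> N] h(1)
    by (intro borel_measurable_scaleR borel_measurable_indicator borel_measurable_times) auto
  have "\<bar>green_ball \<alpha> e x y * h y\<bar> \<le> g y" if y: "y \<in> ball e 1" for y
  proof -
    have "dist y x < 2"
      using x y dist_triangle[of y x e] by (simp add: dist_commute)
    have "0 \<le> green_ball \<alpha> e x y" "green_ball \<alpha> e x y \<le> K * dist x y powr (2 * \<alpha> - real CARD('n))"
      using green_ball_nonneg[OF \<alpha>(1)] green_ball_le_dist_powr[OF \<alpha> N] by (auto simp: K_def mult.assoc)
    then have "\<bar>green_ball \<alpha> e x y * h y\<bar> \<le> K * dist x y powr (2 * \<alpha> - real CARD('n)) * H"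
      unfolding abs_mult using h(2)[OF y] by (intro mult_mono) auto
    also have "\<dots> = g y"
      using \<open>dist y x < 2\<close> by (simp add: g_def dist_commute mult_ac)
    finally show ?thesis .
  qed
  then show "AE y in lborel. y \<in> ball e 1 \<longrightarrow> norm (green_ball \<alpha> e x y * h y) \<le> norm (g y)"
    by (intro AE_I2) (auto intro: order_trans[OF _ abs_ge_self])
qed

lemma set_integrable_green_potential:
  fixes e x :: "real^'n::finite"
  assumes \<alpha>: "0 < \<alpha>" "\<alpha> < 1" and N: "CARD('n) \<ge> 2" and e: "norm e = 1" and x: "x \<in> ball e 1"
    and s: "0 < s" and c: "0 \<le> c" and p: "0 \<le> p"
  shows "set_integrable lborel (ball e 1) (\<lambda>y. green_ball \<alpha> e x y * (c / norm (y + s *\<^sub>R e) powr p))"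
proof (rule set_integrable_green_ball_mult[OF \<alpha> N x, where H = "c / s powr p"])
  show "(\<lambda>y. c / norm (y + s *\<^sub>R e) powr p) \<in> borel_measurable lborel"
    by measurable
  fix y
  assume "y \<in> ball e 1"
  then have "s \<le> norm (y + s *\<^sub>R e)"
    using norm_add_scaleR_unit_ge[OF e] s by simp
  moreover from this have "0 < norm (y + s *\<^sub>R e)"
    using s by linarith
  ultimately show "\<bar>c / norm (y + s *\<^sub>R e) powr p\<bar> \<le> c / s powr p"
    using s c p by (auto intro!: divide_left_mono powr_mono2)
qed

lemma green_potential_integrand_ge:
  fixes e x y :: "real^'n::finite"
  assumes \<alpha>: "0 < \<alpha>" and e: "norm e = 1" and s: "0 < s" "s \<le> 1" "2 * s \<le> norm x"
    and c: "0 \<le> c" and p: "0 \<le> p"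
    and C: "0 \<le> C" "\<And>y. y \<in> ball e 1 \<Longrightarrow> y \<noteq> x \<Longrightarrow> C * (1 - (dist y e)\<^sup>2) powr \<alpha> \<le> green_ball \<alpha> e x y"
    and y: "y \<in> ball (s *\<^sub>R e) (s / 2)"
  shows "C * (s / 2) powr \<alpha> * (c / ((5 / 2) powr p * s powr p))
    \<le> green_ball \<alpha> e x y * (c / norm (y + s *\<^sub>R e) powr p)"
proof (rule mult_mono)
  have "dist y (s *\<^sub>R e) < s / 2"
    using y by (simp add: dist_commute)
  note y' = small_ball_near_boundary[OF e s(1,2) this]
  have "y \<noteq> x"
    using y'(4) s by auto
  moreover have "(s / 2) powr \<alpha> \<le> (1 - (dist y e)\<^sup>2) powr \<alpha>"
    using y'(2) s \<alpha> by (intro powr_mono2) auto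
  ultimately show "C * (s / 2) powr \<alpha> \<le> green_ball \<alpha> e x y"
    using C y'(1) by (meson mult_left_mono order_trans)
  have "s \<le> norm (y + s *\<^sub>R e)"
    using norm_add_scaleR_unit_ge[OF e y'(1)] s by simp
  then show "c / ((5 / 2) powr p * s powr p) \<le> c / norm (y + s *\<^sub>R e) powr p"
    using y'(3) s c p
    by (intro divide_left_mono) (auto simp: powr_mult[symmetric] intro!: powr_mono2)
qed (use green_ball_nonneg[OF \<alpha>] c in auto)

lemma green_potential_ge:
  fixes e x :: "real^'n::finite"
  assumes \<alpha>: "0 < \<alpha>" "\<alpha> < 1" and N: "CARD('n) \<ge> 2" and e: "norm e = 1" and x: "x \<in> ball e 1"
    and c: "0 < c"
  shows "\<exists>K>0. \<forall>\<^sub>F s in at_right 0. K * s powr (- \<alpha>) \<le>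
    (LINT y:ball e 1|lborel. green_ball \<alpha> e x y * (c / norm (y + s *\<^sub>R e) powr (real CARD('n) + 2 * \<alpha>)))"
proof -
  define p where "p = real CARD('n) + 2 * \<alpha>"
  obtain C where C: "0 < C" "\<And>y. y \<in> ball e 1 \<Longrightarrow> y \<noteq> x \<Longrightarrow> C * (1 - (dist y e)\<^sup>2) powr \<alpha> \<le> green_ball \<alpha> e x y"
    using green_ball_ge_boundary_powr[OF \<alpha> N x] by blast
  define K where "K = unit_ball_vol (real CARD('n)) * C * c / (2 powr (real CARD('n) + \<alpha>) * (5 / 2) powr p)"
  have "K * s powr (- \<alpha>) \<le> (LINT y:ball e 1|lborel. green_ball \<alpha> e x y * (c / norm (y + s *\<^sub>R e) powr p))"
    if s: "0 < s" "s \<le> 1" "2 * s \<le> norm x" for s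
  proof -
    define S where "S = ball (s *\<^sub>R e) (s / 2)"
    have "K * s powr (- \<alpha>) = measure lborel S * (C * (s / 2) powr \<alpha> * (c / ((5 / 2) powr p * s powr p)))"
      using small_ball_contribution_eq[OF s(1), where V = "unit_ball_vol (real CARD('n))" and C = C
          and a = \<alpha> and c = c and n = "CARD('n)"]
      using content_ball[of "s / 2" "s *\<^sub>R e"] s(1) by (simp add: S_def K_def p_def mult_ac)
    also have "\<dots> \<le> (LINT y:ball e 1|lborel. green_ball \<alpha> e x y * (c / norm (y + s *\<^sub>R e) powr p))"
    proof (rule measure_mult_le_set_integral)
      show "set_integrable lborel (ball e 1) (\<lambda>y. green_ball \<alpha> e x y * (c / norm (y + s *\<^sub>R e) powr p))"
        using \<alpha> N c s by (intro set_integrable_green_potential[OF _ _ _ e x]) (auto simp: p_def)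
      show "S \<subseteq> ball e 1"
        using small_ball_near_boundary(1)[OF e s(1,2)] by (auto simp: S_def dist_commute)
      show "emeasure lborel S < \<infinity>"
        unfolding S_def by (rule emeasure_lborel_ball_finite)
      show "C * (s / 2) powr \<alpha> * (c / ((5 / 2) powr p * s powr p))
          \<le> green_ball \<alpha> e x y * (c / norm (y + s *\<^sub>R e) powr p)" if "y \<in> S" for y
        using that \<alpha> c s C by (intro green_potential_integrand_ge[OF _ e]) (auto simp: S_def p_def)
      show "0 \<le> green_ball \<alpha> e x y * (c / norm (y + s *\<^sub>R e) powr p)" for y
        using green_ball_nonneg[OF \<alpha>(1), of e x y] c by simp
    qed (simp add: S_def)
    finally show ?thesis .
  qed
  moreover have "0 < norm x"
    using x e by (auto simp: dist_norm)
  then have "\<forall>\<^sub>F s in at_right 0. 0 < s \<and> s \<le> 1 \<and> 2 * s \<le> norm x"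
    unfolding eventually_at_right_field by (intro exI[of _ "min 1 (norm x / 2)"]) auto
  moreover have "0 < K"
    using C(1) c by (simp add: K_def)
  ultimately show ?thesis
    unfolding p_def by (auto elim!: eventually_mono)
qed

theorem lemma3p2:
  fixes \<alpha> :: real and k :: "'n::finite" and x :: "real^'n"
  assumes "CARD('n) \<ge> 2" and "0 < \<alpha>" and "\<alpha> < 1"
    and "x \<in> ball (axis k 1) 1"
  shows "filterlim
           (\<lambda>s. LINT y:ball (axis k 1) 1|lborel.
                  green_ball \<alpha> (axis k 1) x y *
                  (c_frac k \<alpha> / norm (y + s *\<^sub>R axis k 1) powr (real CARD('n) + 2 * \<alpha>)))
           at_top (at_right 0)"
proof -
  obtain K where "0 < K" and lower: "\<forall>\<^sub>F s in at_right 0. K * s powr (- \<alpha>) \<le>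
      (LINT y:ball (axis k 1) 1|lborel. green_ball \<alpha> (axis k 1) x y *
        (c_frac k \<alpha> / norm (y + s *\<^sub>R axis k 1) powr (real CARD('n) + 2 * \<alpha>)))"
    using green_potential_ge[OF assms(2,3,1) norm_axis_1 assms(4) c_frac_pos[OF assms(2,3,1)]] by blast
  have "filterlim (\<lambda>s. K * s powr (- \<alpha>)) at_top (at_right 0)"
    using \<open>0 < K\<close> assms(2) by real_asymp
  then show ?thesis
    using lower by (rule filterlim_at_top_mono)
qed

end
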